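(* Let $p\in[1,\infty)$. The composition $\mathcal Q_\phi\mathcal T^\pi$ is a $\gamma$-contraction with respect to $\bar w_p$, i.e. $\bar w_p(\mathcal Q_\phi\mathcal T^\pi\mu,\mathcal Q_\phi\mathcal T^\pi\nu)\le\gamma\,\bar w_p(\mu,\nu)$ for all $\mu,\nu$ in the domain. Furthermore, the operator $\Pi_{w_1}\mathcal Q_\phi\mathcal T^\pi$ is a $\gamma$-contraction with respect to $\bar w_\infty$.
   Context: Setting: an infinite-horizon discounted MDP with finite state set $\mathcal S$, finite action set $\mathcal A$, transition kernel $\mathcal P(\cdot\mid s,a)$, bounded reward distributions $\mathcal R(s,a)$ on $\mathbb R$, discount $\gamma\in(0,1)$, and a policy $\pi$. For a distribution $\nu$ on $\mathbb R$, $F_\nu$ is its CDF and $F_\nu^{-1}(\tau)=\inf\{x:\tau\le F_\nu(x)\}$ its quantile function. The distributional Bellman operator on $\eta\in\mathscr P(\mathbb R)^{\mathcal S\times\mathcal A}$ is defined by $F_{\mathcal T^\pi\eta(s,a)}(z)=\sum_{s',a'}\mathcal P(s'\mid s,a)\pi(a'\mid s')\int F_{\eta(s',a')}\big(\tfrac{z-r}{\gamma}\big)\,dF_{\mathcal R(s,a)}(r)$. Wasserstein distances: $w_p(\mu,\nu)=\big(\int_0^1|F_\mu^{-1}(\tau)-F_\nu^{-1}(\tau)|^p d\tau\big)^{1/p}$, $w_\infty(\mu,\nu)=\sup_{\tau\in(0,1)}|F^{-1}_\mu(\tau)-F^{-1}_\nu(\tau)|$, and $\bar w_p(\eta,\eta')=\sup_{(s,a)}w_p(\eta(s,a),\eta'(s,a))$.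 Quantile distortion operator: for a function $\phi:\mathcal S\times\mathcal A\times[0,1]\to\mathbb R$, $\mathcal Q_\phi\eta$ is defined by $F^{-1}_{\mathcal Q_\phi\eta(s,a)}(\tau)=F^{-1}_{\eta(s,a)}(\tau)-\phi(s,a,\tau)$; $\phi$ is assumed such that this is the quantile function of a probability distribution for every $\eta$ considered (so $\mathcal Q_\phi$ is well defined). Quantile projection: for fixed $0=\tau_0<\tau_1<\dots<\tau_M=1$, $\Pi_{w_1}\eta(s,a)=\frac1M\sum_{m=1}^M\delta_{F^{-1}_{\eta(s,a)}(\hat\tau_m)}$ with $\hat\tau_m=\frac{\tau_{m-1}+\tau_m}{2}$, i.e. the $w_1$-minimizing projection onto distributions of the form $\frac1M\sum_m\delta_{\theta_m}$. Distributions are taken with bounded support (so all distances are finite). *)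

theory Defs
  imports "HOL-Probability.Probability"
begin

definition quantile :: "real measure \<Rightarrow> real \<Rightarrow> real" where
  "quantile M \<tau> = Inf {x. \<tau> \<le> cdf M x}"

definition bdist :: "real measure \<Rightarrow> bool" where
  "bdist M \<longleftrightarrow> real_distribution M \<and> (\<exists>B. emeasure M (- {-B..B}) = 0)"

definition wass :: "real \<Rightarrow> real measure \<Rightarrow> real measure \<Rightarrow> real" where
  "wass p \<mu> \<nu> =
     (\<integral>\<tau>. indicator {0<..<1} \<tau> * \<bar>quantile \<mu> \<tau> - quantile \<nu> \<tau>\<bar> powr p \<partial>lborel) powr (1 / p)"

definition wass_inf :: "real measure \<Rightarrow> real measure \<Rightarrow> real" where
  "wass_inf \<mu> \<nu> = (SUP \<tau>\<in>{0<..<1}. \<bar>quantile \<mu> \<tau> - quantile \<nu> \<tau>\<bar>)"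

definition bar_wass :: "real \<Rightarrow> ('s \<Rightarrow> 'a \<Rightarrow> real measure) \<Rightarrow> ('s \<Rightarrow> 'a \<Rightarrow> real measure) \<Rightarrow> real" where
  "bar_wass p \<eta> \<eta>' = (SUP sa\<in>UNIV. wass p (\<eta> (fst sa) (snd sa)) (\<eta>' (fst sa) (snd sa)))"

definition bar_wass_inf :: "('s \<Rightarrow> 'a \<Rightarrow> real measure) \<Rightarrow> ('s \<Rightarrow> 'a \<Rightarrow> real measure) \<Rightarrow> real" where
  "bar_wass_inf \<eta> \<eta>' = (SUP sa\<in>UNIV. wass_inf (\<eta> (fst sa) (snd sa)) (\<eta>' (fst sa) (snd sa)))"

definition bellman_cdf ::
  "('s::finite \<Rightarrow> 'a::finite \<Rightarrow> 's pmf) \<Rightarrow> ('s \<Rightarrow> 'a pmf) \<Rightarrow> ('s \<Rightarrow> 'a \<Rightarrow> real measure) \<Rightarrow> real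
    \<Rightarrow> ('s \<Rightarrow> 'a \<Rightarrow> real measure) \<Rightarrow> 's \<Rightarrow> 'a \<Rightarrow> real \<Rightarrow> real" where
  "bellman_cdf P \<pi> R \<gamma> \<eta> s a z =
     (\<Sum>s'\<in>UNIV. \<Sum>a'\<in>UNIV. pmf (P s a) s' * pmf (\<pi> s') a' *
        (\<integral>r. cdf (\<eta> s' a') ((z - r) / \<gamma>) \<partial>(R s a)))"

definition bellman ::
  "('s::finite \<Rightarrow> 'a::finite \<Rightarrow> 's pmf) \<Rightarrow> ('s \<Rightarrow> 'a pmf) \<Rightarrow> ('s \<Rightarrow> 'a \<Rightarrow> real measure) \<Rightarrow> real
    \<Rightarrow> ('s \<Rightarrow> 'a \<Rightarrow> real measure) \<Rightarrow> 's \<Rightarrow> 'a \<Rightarrow> real measure" where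
  "bellman P \<pi> R \<gamma> \<eta> s a = interval_measure (bellman_cdf P \<pi> R \<gamma> \<eta> s a)"

definition qdist_ok :: "('s \<Rightarrow> 'a \<Rightarrow> real \<Rightarrow> real) \<Rightarrow> ('s \<Rightarrow> 'a \<Rightarrow> real measure) \<Rightarrow> bool" where
  "qdist_ok \<phi> \<eta> \<longleftrightarrow> (\<forall>s a. \<exists>M. bdist M \<and>
      (\<forall>\<tau>\<in>{0<..<1}. quantile M \<tau> = quantile (\<eta> s a) \<tau> - \<phi> s a \<tau>))"

definition qdistort :: "('s \<Rightarrow> 'a \<Rightarrow> real \<Rightarrow> real) \<Rightarrow> ('s \<Rightarrow> 'a \<Rightarrow> real measure) \<Rightarrow> 's \<Rightarrow> 'a \<Rightarrow> real measure" where
  "qdistort \<phi> \<eta> s a = (SOME M. bdist M \<and>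
      (\<forall>\<tau>\<in>{0<..<1}. quantile M \<tau> = quantile (\<eta> s a) \<tau> - \<phi> s a \<tau>))"

definition qproj :: "nat \<Rightarrow> (nat \<Rightarrow> real) \<Rightarrow> ('s \<Rightarrow> 'a \<Rightarrow> real measure) \<Rightarrow> 's \<Rightarrow> 'a \<Rightarrow> real measure" where
  "qproj m \<tau> \<eta> s a = measure_pmf (map_pmf (\<lambda>k. quantile (\<eta> s a) ((\<tau> (k - 1) + \<tau> k) / 2))
                                        (pmf_of_set {1..m}))"

end

theory Submission
  imports Defs
begin

text \<open>
  Quantile distortion subtracts the same function from the quantile functions of both arguments,
  so it leaves quantile differences, and with them \<open>w\<^sub>p\<close> and \<open>w\<^sub>\<infinity>\<close>, unchanged; the quantile
  projection only samples quantile differences. Everything thus reduces to the Bellman operator.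

  For \<open>w\<^sub>p\<close> we compare stop-loss transforms. For distributions \<open>M\<close>, \<open>N\<close> the integral over
  \<open>(0,1)\<close> of \<open>(F\<^sub>M\<^sup>-\<^sup>1 - F\<^sub>N\<^sup>-\<^sup>1 - t)\<^sup>+\<close> equals \<open>\<integral> (F\<^sub>N(x - t) - F\<^sub>M(x))\<^sup>+ dx\<close>, and this is at most
  \<open>E (X - Y - t)\<^sup>+\<close> for every coupling \<open>X \<sim> M\<close>, \<open>Y \<sim> N\<close>. The Bellman image is a mixture, with
  weights \<open>P(s'|s,a) \<pi>(a'|s')\<close>, of the laws of \<open>r + \<gamma> G\<close>; realising \<open>G\<close> as \<open>F\<^sup>-\<^sup>1(U)\<close> for one
  uniform \<open>U\<close> couples the images of \<open>\<mu>\<close> and \<open>\<nu>\<close>, and bounds the stop-loss transform of their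
  quantile difference by the mixture of those of \<open>\<gamma> (F\<^sub>\<mu>\<^sup>-\<^sup>1 - F\<^sub>\<nu>\<^sup>-\<^sup>1)\<close>. As \<open>|y|\<^sup>p\<close> is the
  average of \<open>(y - t)\<^sup>+ + (-y - t)\<^sup>+\<close> over \<open>t \<ge> 0\<close> with weight \<open>p (p - 1) t\<^sup>p\<^sup>-\<^sup>2\<close> (for \<open>p > 1\<close>),
  this gives \<open>w\<^sub>p(T\<mu>, T\<nu>)\<^sup>p \<le> \<gamma>\<^sup>p max w\<^sub>p(\<mu>, \<nu>)\<^sup>p\<close>.

  For \<open>w\<^sub>\<infinity>\<close>, a bound \<open>F\<^sub>\<mu>\<^sup>-\<^sup>1 \<le> F\<^sub>\<nu>\<^sup>-\<^sup>1 + c\<close> is a shift of the cdfs by \<open>c\<close>, which the same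
  coupling turns into a shift by \<open>\<gamma> c\<close> of the cdfs of the Bellman images.
\<close>

section \<open>Quantile functions\<close>

definition uniform01 :: "real measure" where
  "uniform01 = restrict_space lborel {0<..<1}"

lemma space_uniform01 [simp]: "space uniform01 = {0<..<1}"
  by (simp add: uniform01_def space_restrict_space)

lemma emeasure_uniform01: "A \<subseteq> {0<..<1} \<Longrightarrow> emeasure uniform01 A = emeasure lborel A"
  unfolding uniform01_def by (rule emeasure_restrict_space) auto

interpretation uniform01: prob_space uniform01
  by (rule prob_spaceI) (simp add: emeasure_uniform01)

lemma measure_uniform01_le:
  assumes "0 \<le> c" "c \<le> 1"
  shows "measure uniform01 {u \<in> space uniform01. u \<le> c} = c"
proof (cases "c < 1")
  case True
  then have "{u \<in> space uniform01. u \<le> c} = {0<..c}" by auto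
  moreover have "{0<..c} \<subseteq> {0<..<1}" using True by auto
  ultimately show ?thesis using assms by (simp add: measure_def emeasure_uniform01)
next
  case False
  then have "{u \<in> space uniform01. u \<le> c} = {0<..<1}" using assms by auto
  then show ?thesis using False assms by (simp add: measure_def emeasure_uniform01)
qed

lemma quantile_le_iff:
  assumes M: "real_distribution M" and u: "0 < u" "u < 1"
  shows "quantile M u \<le> x \<longleftrightarrow> u \<le> cdf M x"
proof -
  interpret real_distribution M by (rule M)
  define S where "S = {x. u \<le> cdf M x}"
  have "\<forall>\<^sub>F x in at_top. u < cdf M x"
    using order_tendstoD(1)[OF cdf_lim_at_top_prob u(2)] .
  then obtain x0 where "u \<le> cdf M x0"
    by (auto simp: eventually_at_top_linorder dest: less_imp_le)
  then have "S \<noteq> {}" by (auto simp: S_def)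
  have "\<forall>\<^sub>F x in at_bot. cdf M x < u"
    using order_tendstoD(2)[OF cdf_lim_at_bot u(1)] .
  then obtain x1 where "\<And>x. x \<le> x1 \<Longrightarrow> cdf M x < u"
    by (auto simp: eventually_at_bot_linorder)
  then have "bdd_below S"
    unfolding S_def bdd_below_def by (metis linorder_not_le mem_Collect_eq order_less_imp_le)
  \<comment> \<open>S is an up-set, so right continuity of the cdf puts its infimum into S\<close>
  have "\<forall>\<^sub>F y in at_right (Inf S). u \<le> cdf M y"
  proof (rule eventually_at_rightI)
    fix y assume "y \<in> {Inf S<..<Inf S + 1}"
    then obtain z where "z \<in> S" "z < y"
      using cInf_less_iff[OF \<open>S \<noteq> {}\<close> \<open>bdd_below S\<close>] by auto
    then show "u \<le> cdf M y" unfolding S_def using cdf_nondecreasing[of z y] by auto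
  qed simp
  then have "u \<le> cdf M (Inf S)"
    using cdf_is_right_cont[of "Inf S"]
    by (intro tendsto_lowerbound[where F="at_right (Inf S)"]) (auto simp: continuous_within)
  show ?thesis
  proof
    assume "quantile M u \<le> x"
    then show "u \<le> cdf M x"
      using \<open>u \<le> cdf M (Inf S)\<close> cdf_nondecreasing[of "Inf S" x]
      unfolding quantile_def S_def[symmetric] by linarith
  next
    assume "u \<le> cdf M x"
    then show "quantile M u \<le> x"
      unfolding quantile_def S_def[symmetric] by (intro cInf_lower \<open>bdd_below S\<close>) (simp add: S_def)
  qed
qed

lemma cdf_quantile_ge:
  "real_distribution M \<Longrightarrow> 0 < u \<Longrightarrow> u < 1 \<Longrightarrow> u \<le> cdf M (quantile M u)"
  using quantile_le_iff[of M u "quantile M u"] by simp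

lemma quantile_mono:
  assumes M: "real_distribution M" and "0 < u" "u \<le> v" "v < 1"
  shows "quantile M u \<le> quantile M v"
proof -
  have "u \<le> cdf M (quantile M v)"
    using assms cdf_quantile_ge[OF M, of v] by linarith
  then show ?thesis using assms quantile_le_iff[OF M, of u] by simp
qed

lemma borel_measurable_quantile:
  assumes "real_distribution M"
  shows "quantile M \<in> borel_measurable uniform01"
proof -
  have "mono_on {0<..<1} (quantile M)"
    by (intro mono_onI quantile_mono[OF assms]) auto
  then have "quantile M \<in> borel_measurable (restrict_space borel {0<..<1})"
    by (rule borel_measurable_mono_on_fnc)
  moreover have "sets uniform01 = sets (restrict_space borel {0<..<1})"
    unfolding uniform01_def by (rule sets_restrict_space_cong) simp
  then have "borel_measurable uniform01 = borel_measurable (restrict_space borel {0<..<1})"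
    by (rule measurable_cong_sets) (rule refl)
  ultimately show ?thesis by metis
qed

lemma measure_uniform01_quantile_le:
  assumes M: "real_distribution M"
  shows "measure uniform01 {u \<in> space uniform01. quantile M u \<le> y} = cdf M y"
proof -
  interpret real_distribution M by (rule M)
  have "{u \<in> space uniform01. quantile M u \<le> y} = {u \<in> space uniform01. u \<le> cdf M y}"
    using quantile_le_iff[OF M] by auto
  then show ?thesis
    using measure_uniform01_le cdf_nonneg cdf_bounded_prob by simp
qed

lemma quantile_le_shift_of_cdf:
  assumes M: "real_distribution M" and N: "real_distribution N"
    and cdf_le: "\<And>x. cdf N (x - c) \<le> cdf M x" and u: "0 < u" "u < 1"
  shows "quantile M u \<le> quantile N u + c"
proof -
  have "u \<le> cdf N (quantile N u)" by (rule cdf_quantile_ge[OF N u])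
  also have "\<dots> \<le> cdf M (quantile N u + c)" using cdf_le[of "quantile N u + c"] by simp
  finally show ?thesis using quantile_le_iff[OF M u] by simp
qed

lemma bdist_quantile_bounded:
  assumes "bdist M"
  obtains B where "\<And>u. u \<in> {0<..<1} \<Longrightarrow> \<bar>quantile M u\<bar> \<le> B"
proof -
  from assms obtain B where M: "real_distribution M" and B: "emeasure M (- {-B..B}) = 0"
    unfolding bdist_def by blast
  interpret real_distribution M by (rule M)
  have AE: "AE x in M. x \<in> {-B..B}"
    using B by (subst AE_iff_measurable) auto
  have "prob {x \<in> space M. x \<le> B} = 1"
    using AE by (subst prob_Collect_eq_1) auto
  then have top: "cdf M B = 1" by (simp add: cdf_def atMost_def)
  have bot: "cdf M y = 0" if "y < -B" for y
  proof -
    have "prob {x \<in> space M. x \<le> y} = 0"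
      using AE that by (subst prob_Collect_eq_0) auto
    then show ?thesis by (simp add: cdf_def atMost_def)
  qed
  have "\<bar>quantile M u\<bar> \<le> B" if "u \<in> {0<..<1}" for u
  proof -
    have "quantile M u \<le> B" using that quantile_le_iff[OF M, of u B] top by simp
    moreover have "\<not> quantile M u < -B"
      using that cdf_quantile_ge[OF M, of u] bot[of "quantile M u"] by auto
    ultimately show ?thesis by simp
  qed
  then show ?thesis by (rule that)
qed

section \<open>Stop-loss transforms\<close>

text \<open>\<open>ennreal\<close> truncates negative reals to \<open>0\<close>, so \<open>ennreal (X \<omega> - Y \<omega> - t)\<close> below is the
  excess \<open>(X \<omega> - Y \<omega> - t)\<^sup>+\<close>.\<close>

lemma nn_integral_excess_eq_layers:
  assumes "sigma_finite_measure M"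
    and [measurable]: "X \<in> borel_measurable M" "Y \<in> borel_measurable M"
  shows "(\<integral>\<^sup>+\<omega>. ennreal (X \<omega> - Y \<omega> - t) \<partial>M)
    = (\<integral>\<^sup>+x. emeasure M ({\<omega> \<in> space M. Y \<omega> \<le> x - t} - {\<omega> \<in> space M. X \<omega> \<le> x}) \<partial>lborel)"
proof -
  interpret sigma_finite_measure M by fact
  interpret pair_sigma_finite M lborel ..
  let ?between = "\<lambda>\<omega> x. if Y \<omega> + t \<le> x \<and> x < X \<omega> then 1 else 0 :: ennreal"
  have layer: "ennreal (X \<omega> - Y \<omega> - t) = (\<integral>\<^sup>+x. ?between \<omega> x \<partial>lborel)" for \<omega>
  proof -
    have "(\<lambda>x. ?between \<omega> x) = indicator {Y \<omega> + t..<X \<omega>}"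
      by (auto simp: indicator_def)
    then have "(\<integral>\<^sup>+x. ?between \<omega> x \<partial>lborel) = emeasure lborel {Y \<omega> + t..<X \<omega>}"
      by simp
    then show ?thesis
      by (cases "Y \<omega> + t \<le> X \<omega>") (auto simp: ennreal_neg algebra_simps)
  qed
  then have "(\<integral>\<^sup>+\<omega>. ennreal (X \<omega> - Y \<omega> - t) \<partial>M) = (\<integral>\<^sup>+\<omega>. \<integral>\<^sup>+x. ?between \<omega> x \<partial>lborel \<partial>M)"
    by (intro nn_integral_cong layer)
  also have "\<dots> = (\<integral>\<^sup>+x. \<integral>\<^sup>+\<omega>. ?between \<omega> x \<partial>M \<partial>lborel)"
    by (rule Fubini'[symmetric]) measurable
  also have "\<dots> = (\<integral>\<^sup>+x. emeasure M ({\<omega> \<in> space M. Y \<omega> \<le> x - t} - {\<omega> \<in> space M. X \<omega> \<le> x}) \<partial>lborel)"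
  proof (intro nn_integral_cong)
    fix x
    have "(\<integral>\<^sup>+\<omega>. ?between \<omega> x \<partial>M)
        = (\<integral>\<^sup>+\<omega>. indicator ({\<omega> \<in> space M. Y \<omega> \<le> x - t} - {\<omega> \<in> space M. X \<omega> \<le> x}) \<omega> \<partial>M)"
      by (intro nn_integral_cong) (auto simp: indicator_def algebra_simps not_le)
    then show "(\<integral>\<^sup>+\<omega>. ?between \<omega> x \<partial>M)
        = emeasure M ({\<omega> \<in> space M. Y \<omega> \<le> x - t} - {\<omega> \<in> space M. X \<omega> \<le> x})"
      by simp
  qed
  finally show ?thesis .
qed

lemma (in finite_measure) ennreal_measure_diff_le_emeasure_Diff:
  assumes "A \<in> sets M" "B \<in> sets M"
  shows "ennreal (measure M A - measure M B) \<le> emeasure M (A - B)"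
proof -
  have "measure M A - measure M B \<le> measure M A - measure M (A \<inter> B)"
    using assms by (simp add: finite_measure_mono)
  also have "\<dots> = measure M (A - B)"
    using assms by (simp add: finite_measure_Diff')
  finally show ?thesis
    using assms by (simp add: emeasure_eq_measure ennreal_leI)
qed

lemma (in finite_measure) emeasure_Diff_nested:
  assumes "A \<in> sets M" "B \<in> sets M" "B \<subseteq> A \<or> A \<subseteq> B"
  shows "emeasure M (A - B) = ennreal (measure M A - measure M B)"
  using assms(3)
proof
  assume "B \<subseteq> A"
  then show ?thesis
    using assms(1,2) by (simp add: emeasure_eq_measure finite_measure_Diff)
next
  assume "A \<subseteq> B"
  moreover have "A - B = {}"
    using \<open>A \<subseteq> B\<close> by blast
  ultimately show ?thesis
    using assms(1,2) by (simp only: emeasure_empty) (simp add: finite_measure_mono ennreal_neg)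
qed

lemma cdf_distr:
  "X \<in> borel_measurable M \<Longrightarrow> cdf (distr M borel X) x = measure M {\<omega> \<in> space M. X \<omega> \<le> x}"
  unfolding cdf_def by (subst measure_distr) (auto intro!: arg_cong[where f="measure M"])

lemma stop_loss_coupling_le:
  assumes "prob_space M"
    and [measurable]: "X \<in> borel_measurable M" "Y \<in> borel_measurable M"
  shows "(\<integral>\<^sup>+x. ennreal (cdf (distr M borel Y) (x - t) - cdf (distr M borel X) x) \<partial>lborel)
    \<le> (\<integral>\<^sup>+\<omega>. ennreal (X \<omega> - Y \<omega> - t) \<partial>M)"
proof -
  interpret prob_space M by fact
  show ?thesis
    unfolding nn_integral_excess_eq_layers[OF sigma_finite_measure_axioms assms(2,3)]
      cdf_distr[OF assms(2)] cdf_distr[OF assms(3)]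
    by (intro nn_integral_mono ennreal_measure_diff_le_emeasure_Diff) measurable
qed

lemma stop_loss_quantile_eq:
  assumes M: "real_distribution M" and N: "real_distribution N"
  shows "(\<integral>\<^sup>+u. ennreal (quantile M u - quantile N u - t) \<partial>uniform01)
    = (\<integral>\<^sup>+x. ennreal (cdf N (x - t) - cdf M x) \<partial>lborel)"
proof -
  have lower_set: "{u \<in> space uniform01. quantile L u \<le> y} = {u \<in> space uniform01. u \<le> cdf L y}"
    if "real_distribution L" for L y
    using quantile_le_iff[OF that] by auto
  have events: "{u \<in> space uniform01. quantile L u \<le> y} \<in> sets uniform01"
    if "real_distribution L" for L y
    using borel_measurable_quantile[OF that] by measurable
  have "emeasure uniform01
      ({u \<in> space uniform01. quantile N u \<le> x - t} - {u \<in> space uniform01. quantile M u \<le> x})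
      = ennreal (cdf N (x - t) - cdf M x)" for x
  proof -
    \<comment> \<open>both events are initial segments of (0,1)\<close>
    have nested:
      "{u \<in> space uniform01. quantile M u \<le> x} \<subseteq> {u \<in> space uniform01. quantile N u \<le> x - t} \<or>
       {u \<in> space uniform01. quantile N u \<le> x - t} \<subseteq> {u \<in> space uniform01. quantile M u \<le> x}"
      unfolding lower_set[OF M] lower_set[OF N] by auto
    show ?thesis
      using uniform01.emeasure_Diff_nested[OF events[OF N] events[OF M] nested]
      unfolding measure_uniform01_quantile_le[OF M] measure_uniform01_quantile_le[OF N] .
  qed
  then show ?thesis
    using borel_measurable_quantile[OF M] borel_measurable_quantile[OF N]
    by (simp add: nn_integral_excess_eq_layers[OF uniform01.sigma_finite_measure_axioms])
qed

lemma powr_eq_nn_integral_excess: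
  assumes p: "1 < p" and y: "0 \<le> y"
  shows "(\<integral>\<^sup>+t\<in>{0..}. ennreal (p * (p - 1) * t powr (p - 2) * (y - t)) \<partial>lborel)
    = ennreal (y powr p)"
proof -
  have "((\<lambda>t. p * (p - 1) * (y * t powr (p - 2) - t powr (p - 1))) has_integral
      p * (p - 1) * (y * (y powr (p - 1) / (p - 1)) - y powr p / p)) {0..y}"
    using has_integral_powr_from_0[of "p - 2" y] has_integral_powr_from_0[of "p - 1" y] p y
    by (intro has_integral_mult_right has_integral_diff) (simp_all add: algebra_simps)
  moreover have "p * (p - 1) * (y * (y powr (p - 1) / (p - 1)) - y powr p / p) = y powr p"
    using p powr_mult_base[OF y, of "p - 1"] by (simp add: field_simps)
  moreover have "p * (p - 1) * (y * t powr (p - 2) - t powr (p - 1))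
      = p * (p - 1) * t powr (p - 2) * (y - t)"
    if "t \<in> {0..y}" for t
    using that powr_mult_base[of t "p - 2"] by (simp add: algebra_simps)
  ultimately have "((\<lambda>t. p * (p - 1) * t powr (p - 2) * (y - t)) has_integral y powr p) {0..y}"
    by (metis (no_types, lifting) has_integral_eq)
  then have "(\<integral>\<^sup>+t. ennreal (p * (p - 1) * t powr (p - 2) * (y - t)) * indicator {0..y} t \<partial>lborel)
      = ennreal (y powr p)"
    using p by (intro nn_integral_has_integral_lebesgue') auto
  moreover have "ennreal (p * (p - 1) * t powr (p - 2) * (y - t)) * indicator {0..} t
      = ennreal (p * (p - 1) * t powr (p - 2) * (y - t)) * indicator {0..y} t" for t
    using p by (cases "t \<le> y") (auto simp: indicator_def ennreal_neg mult_nonneg_nonpos)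
  ultimately show ?thesis by simp
qed

lemma abs_powr_eq_nn_integral_excess:
  assumes p: "1 < p"
  shows "ennreal (\<bar>y\<bar> powr p)
    = (\<integral>\<^sup>+t\<in>{0..}. ennreal (p * (p - 1) * t powr (p - 2)) * (ennreal (y - t) + ennreal (- y - t))
        \<partial>lborel)"
proof -
  \<comment> \<open>for \<open>t \<ge> 0\<close> at most one of the two excesses is positive\<close>
  have "ennreal (p * (p - 1) * t powr (p - 2)) * (ennreal (y - t) + ennreal (- y - t))
      = ennreal (p * (p - 1) * t powr (p - 2) * (\<bar>y\<bar> - t))" if "0 \<le> t" for t
    using p that by (cases "0 \<le> y") (simp_all add: ennreal_mult' ennreal_neg)
  then have "(\<integral>\<^sup>+t\<in>{0..}. ennreal (p * (p - 1) * t powr (p - 2)) *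
        (ennreal (y - t) + ennreal (- y - t)) \<partial>lborel)
      = (\<integral>\<^sup>+t\<in>{0..}. ennreal (p * (p - 1) * t powr (p - 2) * (\<bar>y\<bar> - t)) \<partial>lborel)"
    by (intro nn_integral_cong) (simp add: indicator_def)
  then show ?thesis
    using powr_eq_nn_integral_excess[OF p, of "\<bar>y\<bar>"] by simp
qed

lemma nn_integral_abs_powr_eq_excess:
  assumes "sigma_finite_measure M" and p: "1 < p" and [measurable]: "f \<in> borel_measurable M"
  shows "(\<integral>\<^sup>+x. ennreal (\<bar>f x\<bar> powr p) \<partial>M)
    = (\<integral>\<^sup>+t\<in>{0..}. ennreal (p * (p - 1) * t powr (p - 2)) *
         ((\<integral>\<^sup>+x. ennreal (f x - t) \<partial>M) + (\<integral>\<^sup>+x. ennreal (- f x - t) \<partial>M)) \<partial>lborel)"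
proof -
  interpret sigma_finite_measure M by fact
  interpret pair_sigma_finite lborel M ..
  let ?k = "\<lambda>t. ennreal (p * (p - 1) * t powr (p - 2)) * indicator {0..} t"
  have "(\<integral>\<^sup>+x. ennreal (\<bar>f x\<bar> powr p) \<partial>M)
      = (\<integral>\<^sup>+x. \<integral>\<^sup>+t. ?k t * (ennreal (f x - t) + ennreal (- f x - t)) \<partial>lborel \<partial>M)"
    by (intro nn_integral_cong) (simp add: abs_powr_eq_nn_integral_excess[OF p] ac_simps)
  also have "\<dots> = (\<integral>\<^sup>+t. \<integral>\<^sup>+x. ?k t * (ennreal (f x - t) + ennreal (- f x - t)) \<partial>M \<partial>lborel)"
    by (rule Fubini') measurable
  also have "\<dots>
      = (\<integral>\<^sup>+t. ?k t * ((\<integral>\<^sup>+x. ennreal (f x - t) \<partial>M) + (\<integral>\<^sup>+x. ennreal (- f x - t) \<partial>M)) \<partial>lborel)"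
    by (simp add: nn_integral_cmult nn_integral_add)
  finally show ?thesis by (simp add: ac_simps)
qed

lemma nn_integral_abs_powr_le_of_excess_le:
  fixes f :: "'b \<Rightarrow> real" and g :: "'i \<Rightarrow> 'b \<Rightarrow> real" and w :: "'i \<Rightarrow> ennreal"
  assumes M: "sigma_finite_measure M" and "1 \<le> p"
    and [measurable]: "f \<in> borel_measurable M" "\<And>i. i \<in> I \<Longrightarrow> g i \<in> borel_measurable M"
    and pos: "\<And>t. 0 \<le> t \<Longrightarrow>
      (\<integral>\<^sup>+x. ennreal (f x - t) \<partial>M) \<le> (\<Sum>i\<in>I. w i * (\<integral>\<^sup>+x. ennreal (g i x - t) \<partial>M))"
    and neg: "\<And>t. 0 \<le> t \<Longrightarrow>
      (\<integral>\<^sup>+x. ennreal (- f x - t) \<partial>M) \<le> (\<Sum>i\<in>I. w i * (\<integral>\<^sup>+x. ennreal (- g i x - t) \<partial>M))"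
  shows "(\<integral>\<^sup>+x. ennreal (\<bar>f x\<bar> powr p) \<partial>M) \<le> (\<Sum>i\<in>I. w i * (\<integral>\<^sup>+x. ennreal (\<bar>g i x\<bar> powr p) \<partial>M))"
proof -
  interpret sigma_finite_measure M by fact
  define E where "E h t = (\<integral>\<^sup>+x. ennreal (h x - t) \<partial>M) + (\<integral>\<^sup>+x. ennreal (- h x - t) \<partial>M)" for h t
  have E_le: "E f t \<le> (\<Sum>i\<in>I. w i * E (g i) t)" if "0 \<le> t" for t
    unfolding E_def using add_mono[OF pos[OF that] neg[OF that]]
    by (simp add: distrib_left sum.distrib)
  show ?thesis
  proof (cases "p = 1")
    case True
    have "(\<integral>\<^sup>+x. ennreal (\<bar>h x\<bar> powr p) \<partial>M) = E h 0" if [measurable]: "h \<in> borel_measurable M" for h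
    proof -
      have "ennreal (\<bar>h x\<bar> powr p) = ennreal (h x - 0) + ennreal (- h x - 0)" for x
        using True by (cases "0 \<le> h x") (simp_all add: ennreal_neg)
      then show ?thesis
        unfolding E_def by (simp add: nn_integral_add)
    qed
    then show ?thesis
      using E_le[of 0] by simp
  next
    case False
    then have p: "1 < p" using \<open>1 \<le> p\<close> by simp
    have "(\<integral>\<^sup>+x. ennreal (\<bar>f x\<bar> powr p) \<partial>M)
        = (\<integral>\<^sup>+t\<in>{0..}. ennreal (p * (p - 1) * t powr (p - 2)) * E f t \<partial>lborel)"
      unfolding E_def by (rule nn_integral_abs_powr_eq_excess[OF M p]) measurable
    also have "\<dots>
        \<le> (\<integral>\<^sup>+t\<in>{0..}. ennreal (p * (p - 1) * t powr (p - 2)) * (\<Sum>i\<in>I. w i * E (g i) t) \<partial>lborel)"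
      by (intro nn_integral_mono) (auto simp: indicator_def intro!: mult_left_mono E_le)
    also have "\<dots>
        = (\<Sum>i\<in>I. w i * (\<integral>\<^sup>+t\<in>{0..}. ennreal (p * (p - 1) * t powr (p - 2)) * E (g i) t \<partial>lborel))"
      unfolding E_def
      by (simp add: sum_distrib_left sum_distrib_right nn_integral_sum nn_integral_cmult ac_simps)
    also have "\<dots> = (\<Sum>i\<in>I. w i * (\<integral>\<^sup>+x. ennreal (\<bar>g i x\<bar> powr p) \<partial>M))"
      unfolding E_def
      by (intro sum.cong refl arg_cong2[where f="(*)"]
          nn_integral_abs_powr_eq_excess[OF M p, symmetric]) auto
    finally show ?thesis .
  qed
qed

section \<open>Wasserstein distances\<close>

lemma wass_nonneg: "0 \<le> wass p M N"
  by (simp add: wass_def)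

lemma wass_eq_nn_integral:
  assumes M: "real_distribution M" and N: "real_distribution N"
  shows "wass p M N
    = enn2real (\<integral>\<^sup>+u. ennreal (\<bar>quantile M u - quantile N u\<bar> powr p) \<partial>uniform01) powr (1 / p)"
proof -
  let ?f = "\<lambda>u. \<bar>quantile M u - quantile N u\<bar> powr p"
  have "?f \<in> borel_measurable (restrict_space lborel {0<..<1})"
    using borel_measurable_quantile[OF M] borel_measurable_quantile[OF N]
    unfolding uniform01_def by measurable
  then have [measurable]: "(\<lambda>u. indicator {0<..<1} u * ?f u) \<in> borel_measurable lborel"
    by (subst (asm) borel_measurable_restrict_space_iff) auto
  have "(\<integral>u. indicator {0<..<1} u * ?f u \<partial>lborel)
      = enn2real (\<integral>\<^sup>+u. ennreal (indicator {0<..<1} u * ?f u) \<partial>lborel)"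
    by (rule integral_eq_nn_integral) auto
  also have "(\<integral>\<^sup>+u. ennreal (indicator {0<..<1} u * ?f u) \<partial>lborel)
      = (\<integral>\<^sup>+u. ennreal (?f u) \<partial>uniform01)"
    unfolding uniform01_def
    by (subst nn_integral_restrict_space) (auto intro!: nn_integral_cong simp: indicator_def)
  finally show ?thesis
    unfolding wass_def by simp
qed

lemma nn_integral_quantile_diff_powr:
  assumes M: "bdist M" and N: "bdist N" and p: "0 < p"
  shows "(\<integral>\<^sup>+u. ennreal (\<bar>quantile M u - quantile N u\<bar> powr p) \<partial>uniform01)
    = ennreal (wass p M N powr p)"
proof -
  let ?I = "\<integral>\<^sup>+u. ennreal (\<bar>quantile M u - quantile N u\<bar> powr p) \<partial>uniform01"
  obtain B1 B2 where B1: "\<And>u. u \<in> {0<..<1} \<Longrightarrow> \<bar>quantile M u\<bar> \<le> B1"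
    and B2: "\<And>u. u \<in> {0<..<1} \<Longrightarrow> \<bar>quantile N u\<bar> \<le> B2"
    using bdist_quantile_bounded[OF M] bdist_quantile_bounded[OF N] by metis
  have "?I \<le> (\<integral>\<^sup>+u. ennreal ((B1 + B2) powr p) \<partial>uniform01)"
  proof (intro nn_integral_mono ennreal_leI powr_mono2)
    fix u assume "u \<in> space uniform01"
    then show "\<bar>quantile M u - quantile N u\<bar> \<le> B1 + B2"
      using B1[of u] B2[of u] by simp
  qed (use p in auto)
  then have "?I < \<infinity>"
    by (simp add: emeasure_uniform01 order_le_less_trans)
  moreover have "wass p M N powr p = enn2real ?I"
    using M N p unfolding bdist_def by (simp add: wass_eq_nn_integral powr_powr)
  ultimately show ?thesis by simp
qed

lemma abs_quantile_diff_le_wass_inf: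
  assumes M: "bdist M" and N: "bdist N" and u: "u \<in> {0<..<1}"
  shows "\<bar>quantile M u - quantile N u\<bar> \<le> wass_inf M N"
proof -
  obtain B1 B2 where B1: "\<And>u. u \<in> {0<..<1} \<Longrightarrow> \<bar>quantile M u\<bar> \<le> B1"
    and B2: "\<And>u. u \<in> {0<..<1} \<Longrightarrow> \<bar>quantile N u\<bar> \<le> B2"
    using bdist_quantile_bounded[OF M] bdist_quantile_bounded[OF N] by metis
  have "bdd_above ((\<lambda>u. \<bar>quantile M u - quantile N u\<bar>) ` {0<..<1})"
    by (rule bdd_aboveI2[where M="B1 + B2"])
      (rule order_trans[OF abs_triangle_ineq4 add_mono[OF B1 B2]])
  then show ?thesis
    unfolding wass_inf_def by (rule cSUP_upper[OF u])
qed

lemma wass_inf_le: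
  "(\<And>u. u \<in> {0<..<1} \<Longrightarrow> \<bar>quantile M u - quantile N u\<bar> \<le> c) \<Longrightarrow> wass_inf M N \<le> c"
  unfolding wass_inf_def by (rule cSUP_least) auto

lemma wass_le_bar_wass:
  fixes \<eta> \<eta>' :: "'s::finite \<Rightarrow> 'a::finite \<Rightarrow> real measure"
  shows "wass p (\<eta> s a) (\<eta>' s a) \<le> bar_wass p \<eta> \<eta>'"
proof -
  have "(\<lambda>x. wass p (\<eta> (fst x) (snd x)) (\<eta>' (fst x) (snd x))) (s, a)
      \<le> (SUP x\<in>UNIV. wass p (\<eta> (fst x) (snd x)) (\<eta>' (fst x) (snd x)))"
    by (rule cSUP_upper) (simp_all add: bdd_above_finite)
  then show ?thesis unfolding bar_wass_def by simp
qed

lemma bar_wass_le: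
  "(\<And>s a. wass p (\<eta> s a) (\<eta>' s a) \<le> c) \<Longrightarrow> bar_wass p \<eta> \<eta>' \<le> c"
  unfolding bar_wass_def by (rule cSUP_least) auto

lemma wass_inf_le_bar_wass_inf:
  fixes \<eta> \<eta>' :: "'s::finite \<Rightarrow> 'a::finite \<Rightarrow> real measure"
  shows "wass_inf (\<eta> s a) (\<eta>' s a) \<le> bar_wass_inf \<eta> \<eta>'"
proof -
  have "(\<lambda>x. wass_inf (\<eta> (fst x) (snd x)) (\<eta>' (fst x) (snd x))) (s, a)
      \<le> (SUP x\<in>UNIV. wass_inf (\<eta> (fst x) (snd x)) (\<eta>' (fst x) (snd x)))"
    by (rule cSUP_upper) (simp_all add: bdd_above_finite)
  then show ?thesis unfolding bar_wass_inf_def by simp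
qed

lemma bar_wass_inf_le:
  "(\<And>s a. wass_inf (\<eta> s a) (\<eta>' s a) \<le> c) \<Longrightarrow> bar_wass_inf \<eta> \<eta>' \<le> c"
  unfolding bar_wass_inf_def by (rule cSUP_least) auto

section \<open>The distributional Bellman operator\<close>

lemma borel_measurable_cdf:
  assumes "real_distribution M"
  shows "cdf M \<in> borel_measurable borel"
proof -
  interpret real_distribution M by fact
  show ?thesis by (intro borel_measurable_mono monoI cdf_nondecreasing)
qed

lemma ennreal_sum_mult_le:
  assumes "\<And>i. i \<in> I \<Longrightarrow> 0 \<le> w i"
  shows "ennreal (\<Sum>i\<in>I. w i * f i) \<le> (\<Sum>i\<in>I. ennreal (w i) * ennreal (f i))"
proof -
  have "ennreal (\<Sum>i\<in>I. w i * f i) \<le> ennreal (\<Sum>i\<in>I. w i * max 0 (f i))"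
    using assms by (intro ennreal_leI sum_mono mult_left_mono) auto
  also have "\<dots> = (\<Sum>i\<in>I. ennreal (w i * max 0 (f i)))"
    using assms by (intro sum_ennreal[symmetric]) simp
  also have "\<dots> = (\<Sum>i\<in>I. ennreal (w i) * ennreal (f i))"
    using assms by (intro sum.cong refl) (simp add: ennreal_mult max_def ennreal_neg)
  finally show ?thesis .
qed

text \<open>The law of \<open>r + \<gamma> G\<close> for independent \<open>r \<sim> R\<close> and \<open>G \<sim> N\<close>, with \<open>G\<close> realised as the quantile
  transform of a uniform variable, so that all such laws live on the common space \<open>R \<times> (0,1)\<close>.\<close>
definition return_dist :: "real measure \<Rightarrow> real \<Rightarrow> real measure \<Rightarrow> real measure" where
  "return_dist R \<gamma> N = distr (R \<Otimes>\<^sub>M uniform01) borel (\<lambda>(r, u). r + \<gamma> * quantile N u)"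

lemma borel_measurable_return:
  assumes "real_distribution R" "real_distribution N"
  shows "(\<lambda>(r, u). r + \<gamma> * quantile N u) \<in> borel_measurable (R \<Otimes>\<^sub>M uniform01)"
proof -
  have [measurable_cong]: "sets R = sets borel"
    using assms(1) by (rule real_distribution.events_eq_borel)
  note [measurable] = borel_measurable_quantile[OF assms(2)]
  show ?thesis by measurable
qed

lemma real_distribution_return_dist:
  assumes "real_distribution R" "real_distribution N"
  shows "real_distribution (return_dist R \<gamma> N)"
proof -
  interpret R: real_distribution R by fact
  interpret pair_prob_space R uniform01 ..
  show ?thesis
    unfolding return_dist_def by (intro real_distribution_distr borel_measurable_return assms)
qed

lemma cdf_return_dist:
  assumes R: "real_distribution R" and N: "real_distribution N" and "0 < \<gamma>"
  shows "cdf (return_dist R \<gamma> N) z = (\<integral>r. cdf N ((z - r) / \<gamma>) \<partial>R)"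
proof -
  interpret R: real_distribution R by fact
  interpret N: real_distribution N by fact
  interpret pair_prob_space R uniform01 ..
  let ?A = "{\<omega> \<in> space (R \<Otimes>\<^sub>M uniform01). (\<lambda>(r, u). r + \<gamma> * quantile N u) \<omega> \<le> z}"
  have [measurable]: "cdf N \<in> borel_measurable borel"
    by (rule borel_measurable_cdf[OF N])
  have slice: "Pair r -` ?A = {u \<in> space uniform01. quantile N u \<le> (z - r) / \<gamma>}" for r
    using \<open>0 < \<gamma>\<close> by (auto simp: space_pair_measure pos_le_divide_eq algebra_simps)
  note [measurable] = borel_measurable_return[OF R N, of \<gamma>]
  have "emeasure (R \<Otimes>\<^sub>M uniform01) ?A = (\<integral>\<^sup>+r. emeasure uniform01 (Pair r -` ?A) \<partial>R)"
    by (rule uniform01.emeasure_pair_measure_alt) measurable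
  also have "\<dots> = (\<integral>\<^sup>+r. ennreal (cdf N ((z - r) / \<gamma>)) \<partial>R)"
    unfolding slice uniform01.emeasure_eq_measure measure_uniform01_quantile_le[OF N] ..
  also have "\<dots> = ennreal (\<integral>r. cdf N ((z - r) / \<gamma>) \<partial>R)"
    by (intro nn_integral_eq_integral R.integrable_const_bound[where B=1])
      (auto simp: N.cdf_nonneg N.cdf_bounded_prob)
  finally show ?thesis
    unfolding return_dist_def using borel_measurable_return[OF R N]
    by (simp add: cdf_distr emeasure_eq_measure integral_nonneg_AE N.cdf_nonneg)
qed

lemma stop_loss_return_dist_le:
  assumes R: "real_distribution R" and N1: "real_distribution N1" and N2: "real_distribution N2"
  shows "(\<integral>\<^sup>+x. ennreal (cdf (return_dist R \<gamma> N2) (x - t) - cdf (return_dist R \<gamma> N1) x) \<partial>lborel)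
    \<le> (\<integral>\<^sup>+u. ennreal (\<gamma> * (quantile N1 u - quantile N2 u) - t) \<partial>uniform01)"
proof -
  interpret R: real_distribution R by fact
  interpret pair_prob_space R uniform01 ..
  note [measurable] = borel_measurable_quantile[OF N1] borel_measurable_quantile[OF N2]
  have "(\<integral>\<^sup>+x. ennreal (cdf (return_dist R \<gamma> N2) (x - t) - cdf (return_dist R \<gamma> N1) x) \<partial>lborel)
      \<le> (\<integral>\<^sup>+\<omega>. ennreal ((\<lambda>(r, u). r + \<gamma> * quantile N1 u) \<omega> - (\<lambda>(r, u). r + \<gamma> * quantile N2 u) \<omega> - t)
          \<partial>(R \<Otimes>\<^sub>M uniform01))"
    unfolding return_dist_def
    by (intro stop_loss_coupling_le borel_measurable_return R N1 N2) unfold_locales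
  also have "\<dots> = (\<integral>\<^sup>+u. \<integral>\<^sup>+r. ennreal (\<gamma> * (quantile N1 u - quantile N2 u) - t) \<partial>R \<partial>uniform01)"
    by (subst nn_integral_snd[symmetric]) (auto simp: algebra_simps)
  finally show ?thesis
    using R.emeasure_space_1 by simp
qed

lemma cdf_return_dist_shift_le:
  assumes R: "real_distribution R" and N1: "real_distribution N1" and N2: "real_distribution N2"
    and "0 \<le> \<gamma>" and shift: "\<And>u. u \<in> {0<..<1} \<Longrightarrow> quantile N1 u \<le> quantile N2 u + c"
  shows "cdf (return_dist R \<gamma> N2) (x - \<gamma> * c) \<le> cdf (return_dist R \<gamma> N1) x"
proof -
  interpret R: real_distribution R by fact
  interpret pair_prob_space R uniform01 ..
  note [measurable] = borel_measurable_return[OF R N1, of \<gamma>] borel_measurable_return[OF R N2, of \<gamma>]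
  have "\<gamma> * quantile N1 u \<le> \<gamma> * quantile N2 u + \<gamma> * c" if "u \<in> {0<..<1}" for u
    using mult_left_mono[OF shift[OF that] \<open>0 \<le> \<gamma>\<close>] by (simp add: distrib_left)
  then have "{\<omega> \<in> space (R \<Otimes>\<^sub>M uniform01). (\<lambda>(r, u). r + \<gamma> * quantile N2 u) \<omega> \<le> x - \<gamma> * c}
      \<subseteq> {\<omega> \<in> space (R \<Otimes>\<^sub>M uniform01). (\<lambda>(r, u). r + \<gamma> * quantile N1 u) \<omega> \<le> x}"
    by (force simp: space_pair_measure)
  then show ?thesis
    unfolding return_dist_def cdf_distr[OF borel_measurable_return[OF R N1]]
      cdf_distr[OF borel_measurable_return[OF R N2]]
    by (intro finite_measure_mono) measurable
qed

lemma
  fixes w :: "'i \<Rightarrow> real" and M :: "'i \<Rightarrow> real measure"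
  assumes M: "\<And>i. i \<in> I \<Longrightarrow> real_distribution (M i)"
    and w: "\<And>i. i \<in> I \<Longrightarrow> 0 \<le> w i" "sum w I = 1"
  shows real_distribution_mixture:
      "real_distribution (interval_measure (\<lambda>x. \<Sum>i\<in>I. w i * cdf (M i) x))"
    and cdf_mixture:
      "cdf (interval_measure (\<lambda>x. \<Sum>i\<in>I. w i * cdf (M i) x)) = (\<lambda>x. \<Sum>i\<in>I. w i * cdf (M i) x)"
proof -
  let ?F = "\<lambda>x. \<Sum>i\<in>I. w i * cdf (M i) x"
  have fbm: "finite_borel_measure (M i)" if "i \<in> I" for i
    using M[OF that] by (rule real_distribution.finite_borel_measure_M)
  have mono: "?F x \<le> ?F y" if "x \<le> y" for x y
    using that fbm by (intro sum_mono mult_left_mono w finite_borel_measure.cdf_nondecreasing)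
  have right_cont: "continuous (at_right x) ?F" for x
    using fbm
    by (intro continuous_sum continuous_mult continuous_const finite_borel_measure.cdf_is_right_cont)
  have "(?F \<longlongrightarrow> (\<Sum>i\<in>I. w i * 0)) at_bot"
    using fbm by (intro tendsto_sum tendsto_mult tendsto_const finite_borel_measure.cdf_lim_at_bot)
  then have bot: "(?F \<longlongrightarrow> 0) at_bot" by simp
  have "(?F \<longlongrightarrow> (\<Sum>i\<in>I. w i * 1)) at_top"
    using M by (intro tendsto_sum tendsto_mult tendsto_const real_distribution.cdf_lim_at_top_prob)
  then have top: "(?F \<longlongrightarrow> 1) at_top" using w(2) by simp
  show "real_distribution (interval_measure ?F)"
    by (rule real_distribution_interval_measure[OF mono right_cont bot top])
  show "cdf (interval_measure ?F) = ?F"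
    by (rule cdf_interval_measure[OF mono right_cont bot])
qed

definition bellman_weight :: "('s \<Rightarrow> 'a \<Rightarrow> 's pmf) \<Rightarrow> ('s \<Rightarrow> 'a pmf) \<Rightarrow> 's \<Rightarrow> 'a \<Rightarrow> 's \<times> 'a \<Rightarrow> real" where
  "bellman_weight P \<pi> s a = (\<lambda>(s', a'). pmf (P s a) s' * pmf (\<pi> s') a')"

lemma bellman_weight_nonneg: "0 \<le> bellman_weight P \<pi> s a i"
  by (simp add: bellman_weight_def split_beta)

lemma sum_bellman_weight:
  fixes P :: "'s::finite \<Rightarrow> 'a::finite \<Rightarrow> 's pmf"
  shows "(\<Sum>i\<in>UNIV. bellman_weight P \<pi> s a i) = 1"
proof -
  have "(\<Sum>i\<in>UNIV. bellman_weight P \<pi> s a i) = (\<Sum>s'\<in>UNIV. \<Sum>a'\<in>UNIV. bellman_weight P \<pi> s a (s', a'))"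
    unfolding UNIV_Times_UNIV[symmetric] by (rule sum.cartesian_product')
  also have "\<dots> = (\<Sum>s'\<in>UNIV. pmf (P s a) s' * (\<Sum>a'\<in>UNIV. pmf (\<pi> s') a'))"
    by (simp add: bellman_weight_def sum_distrib_left)
  also have "\<dots> = 1"
    by (simp add: sum_pmf_eq_1)
  finally show ?thesis .
qed

section \<open>Quantile distortion and projection\<close>

lemma quantile_qdistort:
  assumes "qdist_ok \<phi> \<eta>" "u \<in> {0<..<1}"
  shows "quantile (qdistort \<phi> \<eta> s a) u = quantile (\<eta> s a) u - \<phi> s a u"
proof -
  from assms(1) obtain M
    where "bdist M \<and> (\<forall>u\<in>{0<..<1}. quantile M u = quantile (\<eta> s a) u - \<phi> s a u)"
    unfolding qdist_ok_def by blast
  then have "bdist (qdistort \<phi> \<eta> s a) \<and>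
      (\<forall>u\<in>{0<..<1}. quantile (qdistort \<phi> \<eta> s a) u = quantile (\<eta> s a) u - \<phi> s a u)"
    unfolding qdistort_def by (rule someI)
  then show ?thesis using assms(2) by blast
qed

lemma wass_qdistort:
  assumes "qdist_ok \<phi> \<eta>" "qdist_ok \<phi> \<eta>'"
  shows "wass p (qdistort \<phi> \<eta> s a) (qdistort \<phi> \<eta>' s a) = wass p (\<eta> s a) (\<eta>' s a)"
proof -
  have "(\<lambda>u. indicator {0<..<1} u *
        \<bar>quantile (qdistort \<phi> \<eta> s a) u - quantile (qdistort \<phi> \<eta>' s a) u\<bar> powr p)
      = (\<lambda>u. indicator {0<..<1} u * \<bar>quantile (\<eta> s a) u - quantile (\<eta>' s a) u\<bar> powr p)"
  proof
    fix u :: real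
    show "indicator {0<..<1} u *
        \<bar>quantile (qdistort \<phi> \<eta> s a) u - quantile (qdistort \<phi> \<eta>' s a) u\<bar> powr p
      = indicator {0<..<1} u * \<bar>quantile (\<eta> s a) u - quantile (\<eta>' s a) u\<bar> powr p"
      by (cases "u \<in> {0<..<1}")
        (simp_all add: quantile_qdistort[OF assms(1)] quantile_qdistort[OF assms(2)])
  qed
  then show ?thesis
    unfolding wass_def by (simp only:)
qed

lemma abs_quantile_map_pmf_diff_le:
  fixes \<theta> \<theta>' :: "'b \<Rightarrow> real"
  assumes c: "\<And>k. k \<in> set_pmf K \<Longrightarrow> \<bar>\<theta> k - \<theta>' k\<bar> \<le> c" and u: "0 < u" "u < 1"
  shows "\<bar>quantile (measure_pmf (map_pmf \<theta> K)) u - quantile (measure_pmf (map_pmf \<theta>' K)) u\<bar> \<le> c"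
proof -
  \<comment> \<open>\<open>measure_pmf\<close> lives on the discrete \<open>\<sigma>\<close>-algebra, so pass to the Borel law with the same cdf\<close>
  let ?D = "\<lambda>f. distr (measure_pmf K) borel f"
  have dist: "real_distribution (?D f)" for f :: "'b \<Rightarrow> real"
    by (rule prob_space.real_distribution_distr[OF prob_space_measure_pmf]) simp
  have cdf_D: "cdf (?D f) x = measure K {k. f k \<le> x}" for f :: "'b \<Rightarrow> real" and x
    by (simp add: cdf_distr)
  have "quantile (measure_pmf (map_pmf f K)) = quantile (?D f)" for f :: "'b \<Rightarrow> real"
    unfolding quantile_def[abs_def] cdf_def
    by (simp add: measure_map_pmf cdf_D[unfolded cdf_def] vimage_def)
  moreover have "quantile (?D f) u \<le> quantile (?D g) u + c"
    if "\<And>k. k \<in> set_pmf K \<Longrightarrow> f k \<le> g k + c" for f g :: "'b \<Rightarrow> real"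
  proof (rule quantile_le_shift_of_cdf[OF dist dist _ u])
    fix x
    have "measure K {k. g k \<le> x - c} = measure K ({k. g k \<le> x - c} \<inter> set_pmf K)"
      by (simp add: measure_Int_set_pmf)
    also have "\<dots> \<le> measure K {k. f k \<le> x}"
      using that by (intro measure_pmf.finite_measure_mono) force+
    finally show "cdf (?D g) (x - c) \<le> cdf (?D f) x"
      unfolding cdf_D .
  qed
  ultimately show ?thesis
    using c by (simp add: abs_le_iff algebra_simps)
qed

lemma wass_inf_qproj_le:
  assumes "1 \<le> m"
    and c: "\<And>k. k \<in> {1..m} \<Longrightarrow>
      \<bar>quantile (\<eta> s a) ((\<tau> (k - 1) + \<tau> k) / 2) - quantile (\<eta>' s a) ((\<tau> (k - 1) + \<tau> k) / 2)\<bar> \<le> c"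
  shows "wass_inf (qproj m \<tau> \<eta> s a) (qproj m \<tau> \<eta>' s a) \<le> c"
  unfolding qproj_def using \<open>1 \<le> m\<close> c
  by (intro wass_inf_le abs_quantile_map_pmf_diff_le) auto

lemma midpoint_knot_in_unit_interval:
  fixes \<tau> :: "nat \<Rightarrow> real"
  assumes "\<tau> 0 = 0" "\<tau> m = 1" and inc: "\<And>k. k < m \<Longrightarrow> \<tau> k < \<tau> (Suc k)" and k: "k \<in> {1..m}"
  shows "(\<tau> (k - 1) + \<tau> k) / 2 \<in> {0<..<1}"
proof -
  have mono: "\<tau> i \<le> \<tau> j" if "i \<le> j" "j \<le> m" for i j
    using that
  proof (induction j rule: dec_induct)
    case (step n)
    then show ?case using inc[of n] by linarith
  qed simp
  have "k - 1 < m" "Suc (k - 1) = k"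
    using k by auto
  then have "\<tau> (k - 1) < \<tau> k"
    using inc[of "k - 1"] by simp
  moreover have "\<tau> 0 \<le> \<tau> (k - 1)" "\<tau> k \<le> \<tau> m"
    using k by (auto intro: mono)
  ultimately show ?thesis
    using assms(1,2) by simp
qed

section \<open>Contraction of the Bellman operator\<close>

locale discounted_mdp =
  fixes P :: "'s::finite \<Rightarrow> 'a::finite \<Rightarrow> 's pmf" and \<pi> :: "'s \<Rightarrow> 'a pmf"
    and R :: "'s \<Rightarrow> 'a \<Rightarrow> real measure" and \<gamma> :: real
  assumes discount_pos: "0 < \<gamma>" and real_distribution_reward: "real_distribution (R s a)"
begin

abbreviation T :: "('s \<Rightarrow> 'a \<Rightarrow> real measure) \<Rightarrow> 's \<Rightarrow> 'a \<Rightarrow> real measure" where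
  "T \<equiv> bellman P \<pi> R \<gamma>"

abbreviation weight :: "'s \<Rightarrow> 'a \<Rightarrow> 's \<times> 'a \<Rightarrow> real" where
  "weight \<equiv> bellman_weight P \<pi>"

lemma real_distribution_return_dist_case_prod:
  "(\<And>s a. real_distribution (\<eta> s a)) \<Longrightarrow> real_distribution (return_dist (R s a) \<gamma> (case_prod \<eta> i))"
  by (cases i) (simp add: real_distribution_return_dist real_distribution_reward)

lemma bellman_cdf_eq_mixture:
  assumes "\<And>s a. real_distribution (\<eta> s a)"
  shows "bellman_cdf P \<pi> R \<gamma> \<eta> s a
    = (\<lambda>z. \<Sum>i\<in>UNIV. weight s a i * cdf (return_dist (R s a) \<gamma> (case_prod \<eta> i)) z)"
proof
  fix z
  have "bellman_cdf P \<pi> R \<gamma> \<eta> s a z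
      = (\<Sum>s'\<in>UNIV. \<Sum>a'\<in>UNIV. weight s a (s', a') * cdf (return_dist (R s a) \<gamma> (\<eta> s' a')) z)"
    by (simp add: bellman_cdf_def bellman_weight_def cdf_return_dist assms discount_pos
        real_distribution_reward)
  also have "\<dots> = (\<Sum>i\<in>UNIV. weight s a i * cdf (return_dist (R s a) \<gamma> (case_prod \<eta> i)) z)"
    unfolding UNIV_Times_UNIV[symmetric] sum.cartesian_product' by simp
  finally show "bellman_cdf P \<pi> R \<gamma> \<eta> s a z
      = (\<Sum>i\<in>UNIV. weight s a i * cdf (return_dist (R s a) \<gamma> (case_prod \<eta> i)) z)" .
qed

lemma
  assumes "\<And>s a. real_distribution (\<eta> s a)"
  shows real_distribution_bellman: "real_distribution (T \<eta> s a)"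
    and cdf_bellman: "cdf (T \<eta> s a) = bellman_cdf P \<pi> R \<gamma> \<eta> s a"
proof -
  have "real_distribution (return_dist (R s a) \<gamma> (case_prod \<eta> i))" for i
    using assms by (rule real_distribution_return_dist_case_prod)
  then show "real_distribution (T \<eta> s a)" "cdf (T \<eta> s a) = bellman_cdf P \<pi> R \<gamma> \<eta> s a"
    unfolding bellman_def bellman_cdf_eq_mixture[OF assms]
    by (simp_all add: real_distribution_mixture cdf_mixture bellman_weight_nonneg
        sum_bellman_weight)
qed

lemma stop_loss_bellman_le:
  assumes \<eta>: "\<And>s a. real_distribution (\<eta> s a)" and \<eta>': "\<And>s a. real_distribution (\<eta>' s a)"
  shows "(\<integral>\<^sup>+u. ennreal (quantile (T \<eta> s a) u - quantile (T \<eta>' s a) u - t) \<partial>uniform01)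
    \<le> (\<Sum>i\<in>UNIV. ennreal (weight s a i) * (\<integral>\<^sup>+u.
          ennreal (\<gamma> * (quantile (case_prod \<eta> i) u - quantile (case_prod \<eta>' i) u) - t) \<partial>uniform01))"
proof -
  let ?F = "\<lambda>\<eta> i. cdf (return_dist (R s a) \<gamma> (case_prod \<eta> i))"
  have dist: "real_distribution (case_prod \<eta> i)" "real_distribution (case_prod \<eta>' i)" for i
    by (cases i; simp add: \<eta> \<eta>')+
  have [measurable]: "?F \<eta> i \<in> borel_measurable borel" "?F \<eta>' i \<in> borel_measurable borel" for i
    by (intro borel_measurable_cdf real_distribution_return_dist_case_prod \<eta> \<eta>')+
  have "(\<integral>\<^sup>+u. ennreal (quantile (T \<eta> s a) u - quantile (T \<eta>' s a) u - t) \<partial>uniform01)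
      = (\<integral>\<^sup>+x. ennreal (cdf (T \<eta>' s a) (x - t) - cdf (T \<eta> s a) x) \<partial>lborel)"
    by (intro stop_loss_quantile_eq real_distribution_bellman \<eta> \<eta>')
  also have "\<dots> = (\<integral>\<^sup>+x. ennreal (\<Sum>i\<in>UNIV. weight s a i * (?F \<eta>' i (x - t) - ?F \<eta> i x)) \<partial>lborel)"
    by (simp add: cdf_bellman bellman_cdf_eq_mixture \<eta> \<eta>' sum_subtractf right_diff_distrib)
  also have "\<dots>
      \<le> (\<integral>\<^sup>+x. (\<Sum>i\<in>UNIV. ennreal (weight s a i) * ennreal (?F \<eta>' i (x - t) - ?F \<eta> i x)) \<partial>lborel)"
    by (intro nn_integral_mono ennreal_sum_mult_le bellman_weight_nonneg)
  also have "\<dots>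
      = (\<Sum>i\<in>UNIV. ennreal (weight s a i) * (\<integral>\<^sup>+x. ennreal (?F \<eta>' i (x - t) - ?F \<eta> i x) \<partial>lborel))"
    by (simp add: nn_integral_sum nn_integral_cmult)
  also have "\<dots> \<le> (\<Sum>i\<in>UNIV. ennreal (weight s a i) * (\<integral>\<^sup>+u.
      ennreal (\<gamma> * (quantile (case_prod \<eta> i) u - quantile (case_prod \<eta>' i) u) - t) \<partial>uniform01))"
    by (intro sum_mono mult_left_mono stop_loss_return_dist_le real_distribution_reward dist) simp
  finally show ?thesis .
qed

lemma nn_integral_quantile_bellman_diff_powr_le:
  assumes "1 \<le> p" and \<mu>: "\<And>s a. real_distribution (\<mu> s a)" and \<nu>: "\<And>s a. real_distribution (\<nu> s a)"
  shows "(\<integral>\<^sup>+u. ennreal (\<bar>quantile (T \<mu> s a) u - quantile (T \<nu> s a) u\<bar> powr p) \<partial>uniform01)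
    \<le> (\<Sum>i\<in>UNIV. ennreal (weight s a i) * ennreal (\<gamma> powr p) * (\<integral>\<^sup>+u.
          ennreal (\<bar>quantile (case_prod \<mu> i) u - quantile (case_prod \<nu> i) u\<bar> powr p) \<partial>uniform01))"
proof -
  let ?d = "\<lambda>i u. \<gamma> * (quantile (case_prod \<mu> i) u - quantile (case_prod \<nu> i) u)"
  let ?D = "\<lambda>u. quantile (T \<mu> s a) u - quantile (T \<nu> s a) u"
  have dist: "real_distribution (case_prod \<mu> i)" "real_distribution (case_prod \<nu> i)" for i
    by (cases i; simp add: \<mu> \<nu>)+
  note [measurable] = borel_measurable_quantile[OF dist(1)] borel_measurable_quantile[OF dist(2)]
    borel_measurable_quantile[OF real_distribution_bellman[OF \<mu>]]
    borel_measurable_quantile[OF real_distribution_bellman[OF \<nu>]]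
  have "(\<integral>\<^sup>+u. ennreal (\<bar>?D u\<bar> powr p) \<partial>uniform01)
      \<le> (\<Sum>i\<in>UNIV. ennreal (weight s a i) * (\<integral>\<^sup>+u. ennreal (\<bar>?d i u\<bar> powr p) \<partial>uniform01))"
  proof (rule nn_integral_abs_powr_le_of_excess_le[OF uniform01.sigma_finite_measure_axioms
        \<open>1 \<le> p\<close>])
    fix t
    show "(\<integral>\<^sup>+u. ennreal (?D u - t) \<partial>uniform01)
      \<le> (\<Sum>i\<in>UNIV. ennreal (weight s a i) * (\<integral>\<^sup>+u. ennreal (?d i u - t) \<partial>uniform01))"
      by (rule stop_loss_bellman_le[OF \<mu> \<nu>])
    show "(\<integral>\<^sup>+u. ennreal (- ?D u - t) \<partial>uniform01)
      \<le> (\<Sum>i\<in>UNIV. ennreal (weight s a i) * (\<integral>\<^sup>+u. ennreal (- ?d i u - t) \<partial>uniform01))"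
      using stop_loss_bellman_le[OF \<nu> \<mu>, where s=s and a=a and t=t] by (simp add: algebra_simps)
  qed measurable
  also have "\<dots> = (\<Sum>i\<in>UNIV. ennreal (weight s a i) * ennreal (\<gamma> powr p) * (\<integral>\<^sup>+u.
      ennreal (\<bar>quantile (case_prod \<mu> i) u - quantile (case_prod \<nu> i) u\<bar> powr p) \<partial>uniform01))"
    using discount_pos by (simp add: abs_mult powr_mult ennreal_mult nn_integral_cmult mult.assoc)
  finally show ?thesis .
qed

lemma wass_bellman_le:
  assumes "1 \<le> p" and \<mu>: "\<And>s a. bdist (\<mu> s a)" and \<nu>: "\<And>s a. bdist (\<nu> s a)"
    and c: "\<And>s a. wass p (\<mu> s a) (\<nu> s a) \<le> c"
  shows "wass p (T \<mu> s a) (T \<nu> s a) \<le> \<gamma> * c"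
proof -
  have \<mu>': "\<And>s a. real_distribution (\<mu> s a)" and \<nu>': "\<And>s a. real_distribution (\<nu> s a)"
    using \<mu> \<nu> by (auto simp: bdist_def)
  have "0 \<le> c"
    using wass_nonneg c[of s a] by (rule order_trans)
  let ?I = "\<integral>\<^sup>+u. ennreal (\<bar>quantile (T \<mu> s a) u - quantile (T \<nu> s a) u\<bar> powr p) \<partial>uniform01"
  have "?I \<le> (\<Sum>i\<in>UNIV. ennreal (weight s a i) * ennreal (\<gamma> powr p) *
      ennreal (wass p (case_prod \<mu> i) (case_prod \<nu> i) powr p))"
    using nn_integral_quantile_bellman_diff_powr_le[OF \<open>1 \<le> p\<close> \<mu>' \<nu>', where s=s and a=a] \<open>1 \<le> p\<close>
    by (simp add: nn_integral_quantile_diff_powr split_beta \<mu> \<nu>)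
  also have "\<dots> \<le> (\<Sum>i\<in>UNIV. ennreal (weight s a i) * ennreal ((\<gamma> * c) powr p))"
    using discount_pos \<open>0 \<le> c\<close> \<open>1 \<le> p\<close> c
    by (intro sum_mono) (simp add: mult.assoc ennreal_mult[symmetric] powr_mult split_beta
        mult_left_mono powr_mono2 wass_nonneg)
  also have "\<dots> = ennreal ((\<gamma> * c) powr p)"
    by (simp add: sum_distrib_right[symmetric] bellman_weight_nonneg sum_bellman_weight)
  finally have "enn2real ?I \<le> (\<gamma> * c) powr p"
    by (simp add: enn2real_leI)
  then have "enn2real ?I powr (1 / p) \<le> ((\<gamma> * c) powr p) powr (1 / p)"
    using \<open>1 \<le> p\<close> by (intro powr_mono2) auto
  then show ?thesis
    using discount_pos \<open>0 \<le> c\<close> \<open>1 \<le> p\<close>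
    by (simp add: wass_eq_nn_integral real_distribution_bellman \<mu>' \<nu>' powr_powr)
qed

lemma quantile_bellman_le_shift:
  assumes \<eta>: "\<And>s a. real_distribution (\<eta> s a)" and \<eta>': "\<And>s a. real_distribution (\<eta>' s a)"
    and shift: "\<And>s a u. u \<in> {0<..<1} \<Longrightarrow> quantile (\<eta> s a) u \<le> quantile (\<eta>' s a) u + c"
    and u: "0 < u" "u < 1"
  shows "quantile (T \<eta> s a) u \<le> quantile (T \<eta>' s a) u + \<gamma> * c"
proof (rule quantile_le_shift_of_cdf[OF real_distribution_bellman[OF \<eta>]
      real_distribution_bellman[OF \<eta>'] _ u])
  have "cdf (return_dist (R s a) \<gamma> (case_prod \<eta>' i)) (x - \<gamma> * c)
      \<le> cdf (return_dist (R s a) \<gamma> (case_prod \<eta> i)) x" for i x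
    using discount_pos
    by (cases i) (auto intro!: cdf_return_dist_shift_le real_distribution_reward \<eta> \<eta>' shift)
  then show "cdf (T \<eta>' s a) (x - \<gamma> * c) \<le> cdf (T \<eta> s a) x" for x
    by (simp add: cdf_bellman bellman_cdf_eq_mixture \<eta> \<eta>' sum_mono mult_left_mono
        bellman_weight_nonneg)
qed

lemma abs_quantile_bellman_diff_le:
  assumes \<mu>: "\<And>s a. real_distribution (\<mu> s a)" and \<nu>: "\<And>s a. real_distribution (\<nu> s a)"
    and c: "\<And>s a u. u \<in> {0<..<1} \<Longrightarrow> \<bar>quantile (\<mu> s a) u - quantile (\<nu> s a) u\<bar> \<le> c"
    and u: "0 < u" "u < 1"
  shows "\<bar>quantile (T \<mu> s a) u - quantile (T \<nu> s a) u\<bar> \<le> \<gamma> * c"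
proof -
  have shift: "quantile (\<mu> s a) v \<le> quantile (\<nu> s a) v + c"
    "quantile (\<nu> s a) v \<le> quantile (\<mu> s a) v + c"
    if "v \<in> {0<..<1}" for s a v
    using c[OF that, of s a] by (auto simp: abs_le_iff)
  show ?thesis
    using quantile_bellman_le_shift[where \<eta>=\<mu> and \<eta>'=\<nu> and s=s and a=a, OF \<mu> \<nu> shift(1) u]
      quantile_bellman_le_shift[where \<eta>=\<nu> and \<eta>'=\<mu> and s=s and a=a, OF \<nu> \<mu> shift(2) u]
    unfolding abs_le_iff by auto
qed

lemma bar_wass_qdistort_bellman_le:
  assumes "1 \<le> p" and \<mu>: "\<And>s a. bdist (\<mu> s a)" and \<nu>: "\<And>s a. bdist (\<nu> s a)"
    and "qdist_ok \<phi> (T \<mu>)" "qdist_ok \<phi> (T \<nu>)"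
  shows "bar_wass p (qdistort \<phi> (T \<mu>)) (qdistort \<phi> (T \<nu>)) \<le> \<gamma> * bar_wass p \<mu> \<nu>"
proof (rule bar_wass_le)
  fix s a
  show "wass p (qdistort \<phi> (T \<mu>) s a) (qdistort \<phi> (T \<nu>) s a) \<le> \<gamma> * bar_wass p \<mu> \<nu>"
    unfolding wass_qdistort[OF assms(4,5)] by (intro wass_bellman_le wass_le_bar_wass assms(1) \<mu> \<nu>)
qed

lemma bar_wass_inf_qproj_qdistort_bellman_le:
  fixes \<tau> :: "nat \<Rightarrow> real"
  assumes \<mu>: "\<And>s a. bdist (\<mu> s a)" and \<nu>: "\<And>s a. bdist (\<nu> s a)"
    and "qdist_ok \<phi> (T \<mu>)" "qdist_ok \<phi> (T \<nu>)"
    and "1 \<le> m" "\<tau> 0 = 0" "\<tau> m = 1" "\<And>k. k < m \<Longrightarrow> \<tau> k < \<tau> (Suc k)"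
  shows "bar_wass_inf (qproj m \<tau> (qdistort \<phi> (T \<mu>))) (qproj m \<tau> (qdistort \<phi> (T \<nu>)))
    \<le> \<gamma> * bar_wass_inf \<mu> \<nu>"
proof (intro bar_wass_inf_le wass_inf_qproj_le[OF \<open>1 \<le> m\<close>])
  fix s a k assume "k \<in> {1..m}"
  define u where "u = (\<tau> (k - 1) + \<tau> k) / 2"
  have u: "u \<in> {0<..<1}"
    unfolding u_def by (rule midpoint_knot_in_unit_interval[OF assms(6-8) \<open>k \<in> {1..m}\<close>])
  have "\<bar>quantile (\<mu> s' a') v - quantile (\<nu> s' a') v\<bar> \<le> bar_wass_inf \<mu> \<nu>"
    if "v \<in> {0<..<1}" for s' a' v
    using abs_quantile_diff_le_wass_inf[OF \<mu> \<nu> that] wass_inf_le_bar_wass_inf by (rule order_trans)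
  then have "\<bar>quantile (T \<mu> s a) u - quantile (T \<nu> s a) u\<bar> \<le> \<gamma> * bar_wass_inf \<mu> \<nu>"
    using u \<mu> \<nu> by (intro abs_quantile_bellman_diff_le) (auto simp: bdist_def)
  then show "\<bar>quantile (qdistort \<phi> (T \<mu>) s a) ((\<tau> (k - 1) + \<tau> k) / 2)
      - quantile (qdistort \<phi> (T \<nu>) s a) ((\<tau> (k - 1) + \<tau> k) / 2)\<bar> \<le> \<gamma> * bar_wass_inf \<mu> \<nu>"
    unfolding u_def[symmetric] quantile_qdistort[OF assms(3) u] quantile_qdistort[OF assms(4) u]
    by simp
qed

end

theorem proposition1:
  fixes P :: "'s::finite \<Rightarrow> 'a::finite \<Rightarrow> 's pmf"
    and \<pi> :: "'s \<Rightarrow> 'a pmf"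
    and R :: "'s \<Rightarrow> 'a \<Rightarrow> real measure"
    and \<gamma> p :: real
    and \<phi> :: "'s \<Rightarrow> 'a \<Rightarrow> real \<Rightarrow> real"
    and \<mu> \<nu> :: "'s \<Rightarrow> 'a \<Rightarrow> real measure"
    and m :: nat and \<tau> :: "nat \<Rightarrow> real"
  assumes "0 < \<gamma>" "\<gamma> < 1"
    and "\<And>s a. bdist (R s a)"
    and "\<And>s a. bdist (\<mu> s a)" "\<And>s a. bdist (\<nu> s a)"
    and "qdist_ok \<phi> (bellman P \<pi> R \<gamma> \<mu>)" "qdist_ok \<phi> (bellman P \<pi> R \<gamma> \<nu>)"
    and "1 \<le> p"
    and "1 \<le> m" "\<tau> 0 = 0" "\<tau> m = 1" "\<And>k. k < m \<Longrightarrow> \<tau> k < \<tau> (Suc k)"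
  shows "bar_wass p (qdistort \<phi> (bellman P \<pi> R \<gamma> \<mu>)) (qdistort \<phi> (bellman P \<pi> R \<gamma> \<nu>))
           \<le> \<gamma> * bar_wass p \<mu> \<nu> \<and>
         bar_wass_inf (qproj m \<tau> (qdistort \<phi> (bellman P \<pi> R \<gamma> \<mu>)))
                      (qproj m \<tau> (qdistort \<phi> (bellman P \<pi> R \<gamma> \<nu>)))
           \<le> \<gamma> * bar_wass_inf \<mu> \<nu>"
proof -
  interpret discounted_mdp P \<pi> R \<gamma>
    by (rule discounted_mdp.intro) (use assms(1,3) in \<open>auto simp: bdist_def\<close>)
  show ?thesis
    using bar_wass_qdistort_bellman_le[OF assms(8,4-7)]
      bar_wass_inf_qproj_qdistort_bellman_le[OF assms(4-7,9-12)]
    by blast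
qed

end
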